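(* Let $M$ be a right $R$-module, $D$ a direct summand of $M$ and $X$ a cyclic submodule of $M$ such that $X\,\beta^*\,D$ in $M$. Then $D$ is cyclic.
   Context: $R$ is an associative ring with identity; modules are unital right $R$-modules. $K\ll N$ means $K$ is small in $N$ ($K+L=N$ implies $L=N$). For submodules $X,Y$ of $M$, $X\,\beta^*\,Y$ means $(X+Y)/X\ll M/X$ and $(X+Y)/Y\ll M/Y$. *)

theory Defs
  imports Main
begin

text \<open>A unital right R-module is modelled as a type 'm (the module M = UNIV)
  with abelian group structure and a right scalar action act x r (= x r).\<close>

definition right_module :: "('m::ab_group_add \<Rightarrow> 'r::ring_1 \<Rightarrow> 'm) \<Rightarrow> bool" where
  "right_module act \<longleftrightarrow>
     (\<forall>x y r. act (x + y) r = act x r + act y r) \<and>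
     (\<forall>x r s. act x (r + s) = act x r + act x s) \<and>
     (\<forall>x r s. act x (r * s) = act (act x r) s) \<and>
     (\<forall>x. act x 1 = x)"

definition submodule :: "('m::ab_group_add \<Rightarrow> 'r::ring_1 \<Rightarrow> 'm) \<Rightarrow> 'm set \<Rightarrow> bool" where
  "submodule act N \<longleftrightarrow> 0 \<in> N \<and> (\<forall>x\<in>N. \<forall>y\<in>N. x + y \<in> N) \<and> (\<forall>x\<in>N. - x \<in> N)
     \<and> (\<forall>x\<in>N. \<forall>r. act x r \<in> N)"

definition msum :: "'m::ab_group_add set \<Rightarrow> 'm set \<Rightarrow> 'm set" where
  "msum A B = {a + b | a b. a \<in> A \<and> b \<in> B}"

definition cyclic_submodule :: "('m::ab_group_add \<Rightarrow> 'r::ring_1 \<Rightarrow> 'm) \<Rightarrow> 'm set \<Rightarrow> bool" where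
  "cyclic_submodule act N \<longleftrightarrow> (\<exists>x. N = {act x r | r. True})"

definition direct_summand :: "('m::ab_group_add \<Rightarrow> 'r::ring_1 \<Rightarrow> 'm) \<Rightarrow> 'm set \<Rightarrow> bool" where
  "direct_summand act D \<longleftrightarrow> submodule act D \<and>
     (\<exists>D'. submodule act D' \<and> msum D D' = UNIV \<and> D \<inter> D' = {0})"

text \<open>small_quot act X K, for submodules X \<subseteq> K of M, expresses K/X \<ll> M/X:
  via the correspondence between submodules of M/X and submodules of M containing X,
  every submodule L \<supseteq> X with K + L = M equals M.\<close>
definition small_quot :: "('m::ab_group_add \<Rightarrow> 'r::ring_1 \<Rightarrow> 'm) \<Rightarrow> 'm set \<Rightarrow> 'm set \<Rightarrow> bool" where
  "small_quot act X K \<longleftrightarrow>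
     (\<forall>L. submodule act L \<and> X \<subseteq> L \<and> msum K L = UNIV \<longrightarrow> L = UNIV)"

definition beta_star :: "('m::ab_group_add \<Rightarrow> 'r::ring_1 \<Rightarrow> 'm) \<Rightarrow> 'm set \<Rightarrow> 'm set \<Rightarrow> bool" where
  "beta_star act X Y \<longleftrightarrow> small_quot act X (msum X Y) \<and> small_quot act Y (msum X Y)"

end

theory Submission
  imports Defs
begin

text \<open>Let \<open>D \<oplus> D' = M\<close> and \<open>X = xR\<close>. Since \<open>(X + D) + (X + D') = M\<close> and \<open>(X + D)/X\<close> is small
  in \<open>M/X\<close>, already \<open>X + D' = M\<close>. Hence the projection of \<open>M\<close> onto \<open>D\<close> along \<open>D'\<close> maps \<open>X\<close>
  onto \<open>D\<close>, so \<open>D\<close> is generated by the \<open>D\<close>-component of \<open>x\<close>.\<close>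

lemma msumI: "a \<in> A \<Longrightarrow> b \<in> B \<Longrightarrow> a + b \<in> msum A B"
  unfolding msum_def by blast

lemma msumE:
  assumes "x \<in> msum A B"
  obtains a b where "x = a + b" "a \<in> A" "b \<in> B"
  using assms unfolding msum_def by blast

lemma subset_msum_left: "0 \<in> B \<Longrightarrow> A \<subseteq> msum A B"
  using msumI[of _ A 0 B] by auto

lemma subset_msum_right: "0 \<in> A \<Longrightarrow> B \<subseteq> msum A B"
  using msumI[of 0 A _ B] by auto

lemma submodule_diff:
  assumes "submodule act N" "x \<in> N" "y \<in> N"
  shows "x - y \<in> N"
  using assms unfolding submodule_def by (metis diff_conv_add_uminus)

lemma submodule_msum:
  assumes "right_module act" "submodule act A" "submodule act B"
  shows "submodule act (msum A B)"
proof -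
  have act_add: "act (a + b) r = act a r + act b r" for a b r
    using assms(1) unfolding right_module_def by blast
  have A: "0 \<in> A" "\<And>a a'. a \<in> A \<Longrightarrow> a' \<in> A \<Longrightarrow> a + a' \<in> A"
    "\<And>a. a \<in> A \<Longrightarrow> - a \<in> A" "\<And>a r. a \<in> A \<Longrightarrow> act a r \<in> A"
    using assms(2) unfolding submodule_def by auto
  have B: "0 \<in> B" "\<And>b b'. b \<in> B \<Longrightarrow> b' \<in> B \<Longrightarrow> b + b' \<in> B"
    "\<And>b. b \<in> B \<Longrightarrow> - b \<in> B" "\<And>b r. b \<in> B \<Longrightarrow> act b r \<in> B"
    using assms(3) unfolding submodule_def by auto
  show ?thesis
    unfolding submodule_def
  proof (intro conjI ballI allI)
    show "0 \<in> msum A B"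
      using msumI[OF A(1) B(1)] by simp
  next
    fix x y assume "x \<in> msum A B" "y \<in> msum A B"
    then obtain a b a' b' where "x = a + b" "y = a' + b'" "a \<in> A" "b \<in> B" "a' \<in> A" "b' \<in> B"
      by (metis msumE)
    then show "x + y \<in> msum A B"
      using msumI[OF A(2) B(2), of a a' b b'] by (simp add: algebra_simps)
  next
    fix x assume "x \<in> msum A B"
    then obtain a b where "x = a + b" "a \<in> A" "b \<in> B" by (rule msumE)
    then show "- x \<in> msum A B"
      using msumI[OF A(3) B(3), of a b] by (simp add: algebra_simps)
  next
    fix x r assume "x \<in> msum A B"
    then obtain a b where "x = a + b" "a \<in> A" "b \<in> B" by (rule msumE)
    then show "act x r \<in> msum A B"
      using msumI[of "act a r" A "act b r" B] A(4) B(4) act_add by simp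
  qed
qed

lemma msum_eq_UNIV_if_small_quot:
  assumes "right_module act" "submodule act X" "submodule act D'"
    and "small_quot act X (msum X D)" "msum D D' = UNIV"
  shows "msum X D' = UNIV"
proof -
  have "0 \<in> X" "0 \<in> D'"
    using assms(2,3) unfolding submodule_def by auto
  have "m \<in> msum (msum X D) (msum X D')" for m
  proof -
    obtain d d' where "m = d + d'" "d \<in> D" "d' \<in> D'"
      using assms(5) msumE by (metis UNIV_I)
    then show ?thesis
      using subset_msum_right[OF \<open>0 \<in> X\<close>, of D] subset_msum_right[OF \<open>0 \<in> X\<close>, of D']
        msumI[of d "msum X D" d' "msum X D'"] by auto
  qed
  moreover have "X \<subseteq> msum X D'"
    using subset_msum_left[OF \<open>0 \<in> D'\<close>] .
  ultimately show ?thesis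
    using assms(4) submodule_msum[OF assms(1-3)] unfolding small_quot_def by blast
qed

lemma summand_eq_cyclic_if_msum_eq_UNIV:
  assumes "right_module act" "submodule act D" "submodule act D'" "D \<inter> D' = {0}"
    and "x = d\<^sub>0 + d\<^sub>0'" "d\<^sub>0 \<in> D" "d\<^sub>0' \<in> D'"
    and "msum {act x r | r. True} D' = UNIV"
  shows "D = {act d\<^sub>0 r | r. True}"
proof
  show "{act d\<^sub>0 r | r. True} \<subseteq> D"
    using assms(2,6) unfolding submodule_def by blast
next
  show "D \<subseteq> {act d\<^sub>0 r | r. True}"
  proof
    fix d assume "d \<in> D"
    have "d \<in> msum {act x r | r. True} D'"
      using assms(8) by simp
    then obtain r e where e: "d = act x r + e" "e \<in> D'"
      by (rule msumE) blast
    have act_add: "act (a + b) s = act a s + act b s" for a b s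
      using assms(1) unfolding right_module_def by blast
    have "act d\<^sub>0 r \<in> D"
      using assms(2,6) unfolding submodule_def by blast
    have "d - act d\<^sub>0 r = act d\<^sub>0' r + e"
      using e(1) assms(5) act_add by (simp add: algebra_simps)
    moreover have "d - act d\<^sub>0 r \<in> D"
      using submodule_diff[OF assms(2) \<open>d \<in> D\<close> \<open>act d\<^sub>0 r \<in> D\<close>] .
    moreover have "act d\<^sub>0' r + e \<in> D'"
      using assms(3,7) e(2) unfolding submodule_def by blast
    ultimately have "d - act d\<^sub>0 r = 0"
      using assms(4) by auto
    then show "d \<in> {act d\<^sub>0 r | r. True}" by auto
  qed
qed

theorem lemma2p4:
  fixes act :: "'m::ab_group_add \<Rightarrow> 'r::ring_1 \<Rightarrow> 'm"
    and D X :: "'m set"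
  assumes "right_module act"
    and "direct_summand act D"
    and "submodule act X" and "cyclic_submodule act X"
    and "beta_star act X D"
  shows "cyclic_submodule act D"
proof -
  obtain D' where D: "submodule act D" "submodule act D'" "msum D D' = UNIV" "D \<inter> D' = {0}"
    using assms(2) unfolding direct_summand_def by blast
  obtain x where x: "X = {act x r | r. True}"
    using assms(4) unfolding cyclic_submodule_def by blast
  have "msum X D' = UNIV"
    using msum_eq_UNIV_if_small_quot assms(1,3,5) D(2,3) unfolding beta_star_def by blast
  moreover obtain d\<^sub>0 d\<^sub>0' where "x = d\<^sub>0 + d\<^sub>0'" "d\<^sub>0 \<in> D" "d\<^sub>0' \<in> D'"
    using D(3) msumE by (metis UNIV_I)
  ultimately have "D = {act d\<^sub>0 r | r. True}"
    using summand_eq_cyclic_if_msum_eq_UNIV assms(1) D(1,2,4) x by blast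
  then show ?thesis
    unfolding cyclic_submodule_def by blast
qed

end
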